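(* Let $N$ be a sub-sound tWF net, $M$ a sub-sound pWF net whose node set is disjoint from that of $N$, and $p$ a place of $N$. Then the tWF net $N\otimes_p M$ is sub-sound.
   Context: Petri nets and markings. A Petri net is a triple $(P,T,F)$ with $P$ a finite set of places, $T$ a finite set of transitions, $P\cap T=\emptyset$, and $F\subseteq (P\times T)\cup(T\times P)$. For a node $x$, $\bullet x=\{y\mid (y,x)\in F\}$, $x\bullet=\{y\mid (x,y)\in F\}$. A marking is a multiset over $P$ (a function $P\to\mathbb N$); sets of places are identified with bags of multiplicity one, $+,-,\le$ are pointwise, and $k.m$ is the sum of $k$ copies of $m$. Transition $t$ is enabled at $m$ iff $\bullet t\le m$, firing gives $m-\bullet t+t\bullet$, and $m\xrightarrow{*}m'$ denotes reachability by a finite (possibly empty) firing sequence. Workflow nets. A pWF net is $(P,T,F,I,O)$ with $(P,T,F)$ a Petri net, $I,O\subseteq P$ non-empty, every node reachable by a directed path from some node of $I$, and some node of $O$ reachable from every node. A tWF net is the same with $I,O$ non-empty subsets of $T$. Input nodes may have incoming edges and output nodes outgoing edges. The place-completion $\mathrm{pc}(N)$ of a tWF net $N=(P,T,F,I,O)$ is obtained by adding two fresh places $p_i,p_o$ with edges $(p_i,t)$ for all $t\in I$ and $(t,p_o)$ for all $t\in O$, and taking input set $\{p_i\}$ and output set $\{p_o\}$. Sub-soundness. A pWF net is sub-sound if for all integers $k\ge k'\ge 0$ and every marking $m'$: if $k.I\xrightarrow{*}m'+k'.O$ then $m'\xrightarrow{*}(k-k').O$. A tWF net is sub-sound iff its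 place-completion is. Place substitution. For a WF net $N=(P,T,F,I,O)$ and a pWF net $M=(P',T',F',I',O')$ with disjoint node sets and $p\in P$, $N\otimes_p M$ is obtained from $N$ by deleting $p$ and all edges incident to $p$, adding all nodes and edges of $M$, adding an edge $(t,p')$ for each $t\in\bullet_N p$ and $p'\in I'$, and an edge $(p',t)$ for each $p'\in O'$ and $t\in p\bullet_N$; its input set is $(I\setminus\{p\})\cup I'$ if $p\in I$ and $I$ otherwise, and its output set is $(O\setminus\{p\})\cup O'$ if $p\in O$ and $O$ otherwise. *)

theory Defs
  imports Main "HOL-Library.Multiset"
begin

record 'a wfnet =
  places :: "'a set"
  trans  :: "'a set"
  flow   :: "('a \<times> 'a) set"
  inp    :: "'a set"
  outp   :: "'a set"

definition pre :: "('a \<times> 'a) set \<Rightarrow> 'a \<Rightarrow> 'a set" where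
  "pre F x = {y. (y, x) \<in> F}"

definition post :: "('a \<times> 'a) set \<Rightarrow> 'a \<Rightarrow> 'a set" where
  "post F x = {y. (x, y) \<in> F}"

definition petri_net :: "('a, 'b) wfnet_scheme \<Rightarrow> bool" where
  "petri_net N \<longleftrightarrow> finite (places N) \<and> finite (trans N) \<and>
     places N \<inter> trans N = {} \<and>
     flow N \<subseteq> (places N \<times> trans N) \<union> (trans N \<times> places N)"

text \<open>Markings are multisets of places; a set of places is the bag of multiplicity one.\<close>
definition enabled :: "('a, 'b) wfnet_scheme \<Rightarrow> 'a multiset \<Rightarrow> 'a \<Rightarrow> bool" where
  "enabled N m t \<longleftrightarrow> mset_set (pre (flow N) t) \<subseteq># m"

definition fire :: "('a, 'b) wfnet_scheme \<Rightarrow> 'a multiset \<Rightarrow> 'a \<Rightarrow> 'a multiset" where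
  "fire N m t = m - mset_set (pre (flow N) t) + mset_set (post (flow N) t)"

definition step :: "('a, 'b) wfnet_scheme \<Rightarrow> 'a multiset \<Rightarrow> 'a multiset \<Rightarrow> bool" where
  "step N m m' \<longleftrightarrow> (\<exists>t \<in> trans N. enabled N m t \<and> m' = fire N m t)"

definition reach :: "('a, 'b) wfnet_scheme \<Rightarrow> 'a multiset \<Rightarrow> 'a multiset \<Rightarrow> bool" where
  "reach N = (step N)\<^sup>*\<^sup>*"

definition wf_connected :: "('a, 'b) wfnet_scheme \<Rightarrow> bool" where
  "wf_connected N \<longleftrightarrow>
     (\<forall>x \<in> places N \<union> trans N. \<exists>i \<in> inp N. (i, x) \<in> (flow N)\<^sup>*) \<and>
     (\<forall>x \<in> places N \<union> trans N. \<exists>q \<in> outp N. (x, q) \<in> (flow N)\<^sup>*)"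

definition pWF :: "('a, 'b) wfnet_scheme \<Rightarrow> bool" where
  "pWF N \<longleftrightarrow> petri_net N \<and> inp N \<noteq> {} \<and> outp N \<noteq> {} \<and>
     inp N \<subseteq> places N \<and> outp N \<subseteq> places N \<and> wf_connected N"

definition tWF :: "('a, 'b) wfnet_scheme \<Rightarrow> bool" where
  "tWF N \<longleftrightarrow> petri_net N \<and> inp N \<noteq> {} \<and> outp N \<noteq> {} \<and>
     inp N \<subseteq> trans N \<and> outp N \<subseteq> trans N \<and> wf_connected N"

definition sub_sound_p :: "('a, 'b) wfnet_scheme \<Rightarrow> bool" where
  "sub_sound_p N \<longleftrightarrow>
     (\<forall>(k::nat) (k'::nat) (m'::'a multiset).
        k' \<le> k \<longrightarrow> set_mset m' \<subseteq> places N \<longrightarrow>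
        reach N (repeat_mset k (mset_set (inp N))) (m' + repeat_mset k' (mset_set (outp N))) \<longrightarrow>
        reach N m' (repeat_mset (k - k') (mset_set (outp N))))"

text \<open>Place completion: the original nodes are tagged Inl, the fresh places
  p_i = Inr True and p_o = Inr False.\<close>
definition pc :: "('a, 'b) wfnet_scheme \<Rightarrow> ('a + bool) wfnet" where
  "pc N = \<lparr> places = Inl ` places N \<union> {Inr True, Inr False},
            trans = Inl ` trans N,
            flow = map_prod Inl Inl ` flow N
                   \<union> {(Inr True, Inl t) | t. t \<in> inp N}
                   \<union> {(Inl t, Inr False) | t. t \<in> outp N},
            inp = {Inr True},
            outp = {Inr False} \<rparr>"

definition sub_sound_t :: "('a, 'b) wfnet_scheme \<Rightarrow> bool" where
  "sub_sound_t N \<longleftrightarrow> sub_sound_p (pc N)"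

definition subst_place :: "('a, 'b) wfnet_scheme \<Rightarrow> 'a \<Rightarrow> ('a, 'c) wfnet_scheme \<Rightarrow> 'a wfnet" where
  "subst_place N p M = \<lparr>
     places = (places N - {p}) \<union> places M,
     trans = trans N \<union> trans M,
     flow = {e \<in> flow N. fst e \<noteq> p \<and> snd e \<noteq> p} \<union> flow M
            \<union> {(t, p'). t \<in> pre (flow N) p \<and> p' \<in> inp M}
            \<union> {(p', t). p' \<in> outp M \<and> t \<in> post (flow N) p},
     inp = (if p \<in> inp N then (inp N - {p}) \<union> inp M else inp N),
     outp = (if p \<in> outp N then (outp N - {p}) \<union> outp M else outp N) \<rparr>"

end

theory Submission
  imports Defs
begin

(* Write R for N \<otimes>_p M and I, O for the initial
   and final markings of M.  In pc R a transition of M acts on places of M only, and a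
   transition of N acts as in pc N except that a token it would put on p becomes a copy of I
   and a token it would take from p becomes a copy of O.
   Invariant: if k.p_i reaches m in pc R, then for some a, b the marking a.I reaches
   (part of m on M) + b.O in M, and k.p_i reaches (rest of m) + (a - b).p in pc N.
   Simulation: replacing each token on p by a copy of O maps runs of pc N to runs of pc R,
   since M moves I to O.
   Given k.p_i \<rightarrow>* m + k'.p_o in pc R, sub-soundness of M moves the part of m on M to
   (a - b).O, sub-soundness of pc N moves (rest of m) + (a - b).p to (k - k').p_o, and the
   simulation carries that run into pc R. *)

lemma reach_refl [simp]: "reach N m m"
  by (simp add: reach_def)

lemma reach_trans: "reach N x y \<Longrightarrow> reach N y z \<Longrightarrow> reach N x z"
  unfolding reach_def by (rule rtranclp_trans)

lemma reach_step: "step N x y \<Longrightarrow> reach N x y"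
  unfolding reach_def by blast

lemma step_iff:
  "step N x y \<longleftrightarrow> (\<exists>t \<in> trans N. \<exists>c.
     x = mset_set (pre (flow N) t) + c \<and> y = mset_set (post (flow N) t) + c)"
  (is "_ \<longleftrightarrow> ?fires")
proof
  assume "step N x y"
  then obtain t where t: "t \<in> trans N" and en: "mset_set (pre (flow N) t) \<subseteq># x"
    and y: "y = x - mset_set (pre (flow N) t) + mset_set (post (flow N) t)"
    unfolding step_def enabled_def fire_def by blast
  show ?fires
    using t en y by (intro bexI[of _ t] exI[of _ "x - mset_set (pre (flow N) t)"]) (simp_all add: add.commute)
next
  assume ?fires
  then obtain t c where "t \<in> trans N"
    and "x = mset_set (pre (flow N) t) + c" "y = mset_set (post (flow N) t) + c" by blast
  then show "step N x y"
    unfolding step_def enabled_def fire_def by (intro bexI[of _ t] conjI) simp_all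
qed

lemma step_transition:
  "t \<in> trans N \<Longrightarrow> step N (mset_set (pre (flow N) t) + c) (mset_set (post (flow N) t) + c)"
  unfolding step_iff by blast

lemma reach_add: "reach N x y \<Longrightarrow> reach N (x + c) (y + c)"
  unfolding reach_def
proof (induction rule: rtranclp_induct)
  case (step y z)
  then have "step N (y + c) (z + c)"
    unfolding step_iff by (metis add.assoc)
  with step.IH show ?case by (simp add: rtranclp.rtrancl_into_rtrancl)
qed simp

definition embeds :: "('a \<Rightarrow> 'b) \<Rightarrow> ('a, 'c) wfnet_scheme \<Rightarrow> ('b, 'd) wfnet_scheme \<Rightarrow> bool" where
  "embeds f A B \<longleftrightarrow> (\<forall>t \<in> trans A. \<exists>t' \<in> trans B.
     mset_set (pre (flow B) t') = image_mset f (mset_set (pre (flow A) t)) \<and>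
     mset_set (post (flow B) t') = image_mset f (mset_set (post (flow A) t)))"

lemma reach_embeds:
  assumes "embeds f A B" and "reach A x y"
  shows "reach B (image_mset f x) (image_mset f y)"
  using assms(2) unfolding reach_def
proof (induction rule: rtranclp_induct)
  case (step y z)
  from \<open>step A y z\<close> obtain t c where t: "t \<in> trans A"
    and y: "y = mset_set (pre (flow A) t) + c" and z: "z = mset_set (post (flow A) t) + c"
    unfolding step_iff by blast
  with assms(1) obtain t' where "t' \<in> trans B"
    "mset_set (pre (flow B) t') = image_mset f (mset_set (pre (flow A) t))"
    "mset_set (post (flow B) t') = image_mset f (mset_set (post (flow A) t))"
    unfolding embeds_def by blast
  then have "step B (image_mset f y) (image_mset f z)"
    unfolding y z image_mset_union by (metis step_transition)
  with step.IH show ?case by (simp add: rtranclp.rtrancl_into_rtrancl)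
qed simp

lemma reach_empty:
  assumes "\<And>t. t \<in> trans N \<Longrightarrow> mset_set (post (flow N) t) \<noteq> {#}"
    and "reach N x {#}"
  shows "x = {#}"
proof -
  have "y \<noteq> {#}" if "reach N x y" "x \<noteq> {#}" for y
    using that unfolding reach_def
  proof (induction rule: rtranclp_induct)
    case (step y z)
    then show ?case using assms(1) unfolding step_iff by fastforce
  qed
  with assms(2) show ?thesis by blast
qed

lemma petri_net_pre_post:
  assumes "petri_net N"
  shows "pre (flow N) x \<subseteq> places N \<union> trans N" "post (flow N) x \<subseteq> places N \<union> trans N"
    and "finite (pre (flow N) x)" "finite (post (flow N) x)"
proof -
  show pre: "pre (flow N) x \<subseteq> places N \<union> trans N" and post: "post (flow N) x \<subseteq> places N \<union> trans N"
    using assms by (auto simp: petri_net_def pre_def post_def)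
  show "finite (pre (flow N) x)" "finite (post (flow N) x)"
    using finite_subset[OF pre] finite_subset[OF post] assms by (auto simp: petri_net_def)
qed

lemma petri_net_trans_pre_post:
  assumes "petri_net N" and "t \<in> trans N"
  shows "pre (flow N) t \<subseteq> places N" "post (flow N) t \<subseteq> places N"
  using assms by (auto simp: petri_net_def pre_def post_def)

lemma pc_simps:
  "places (pc N) = Inl ` places N \<union> {Inr True, Inr False}"
  "trans (pc N) = Inl ` trans N" "inp (pc N) = {Inr True}" "outp (pc N) = {Inr False}"
  by (simp_all add: pc_def)

lemma pc_pre:
  "pre (flow (pc N)) (Inl t) = Inl ` pre (flow N) t \<union> (if t \<in> inp N then {Inr True} else {})"
  by (auto simp: pc_def pre_def)

lemma pc_post:
  "post (flow (pc N)) (Inl t) = Inl ` post (flow N) t \<union> (if t \<in> outp N then {Inr False} else {})"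
  by (auto simp: pc_def post_def)

lemma image_mset_repeat: "image_mset f (repeat_mset n X) = repeat_mset n (image_mset f X)"
  by (induction n) auto

lemma set_mset_repeat: "set_mset (repeat_mset n X) \<subseteq> set_mset X"
  by (induction n) auto

lemma mset_set_replace:
  assumes "finite A" "finite B" "A \<inter> B = {}"
  shows "mset_set ((A - {x}) \<union> (if x \<in> A then B else {})) =
    filter_mset (\<lambda>y. y \<noteq> x) (mset_set A) + repeat_mset (count (mset_set A) x) (mset_set B)"
proof -
  have "filter_mset (\<lambda>y. y \<noteq> x) (mset_set A) = mset_set (A - {x})"
    using assms(1) by (simp add: filter_mset_mset_set set_diff_eq)
  moreover have "(A - {x}) \<inter> B = {}" using assms(3) by blast
  ultimately show ?thesis using assms by (simp add: mset_set_Union)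
qed

text \<open>In a pWF net every transition lies on a path to an output place, so it has a non-empty
  post-set; consequently the empty marking is reachable only from itself.\<close>

lemma pWF_post_nonempty:
  assumes "pWF N" and t: "t \<in> trans N"
  shows "mset_set (post (flow N) t) \<noteq> {#}"
proof -
  have net: "petri_net N" and conn: "wf_connected N" and out: "outp N \<subseteq> places N"
    using assms(1) by (simp_all add: pWF_def)
  obtain q where q: "q \<in> outp N" "(t, q) \<in> (flow N)\<^sup>*"
    using conn t unfolding wf_connected_def by blast
  have "t \<noteq> q" using q(1) t out net by (auto simp: petri_net_def)
  then obtain y where "(t, y) \<in> flow N" using q(2) by (metis converse_rtranclE)
  then have "post (flow N) t \<noteq> {}" by (auto simp: post_def)
  then show ?thesis using petri_net_pre_post(4)[OF net] by (simp add: mset_set_empty_iff)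
qed

lemma pWF_reach_empty: "pWF N \<Longrightarrow> reach N x {#} \<Longrightarrow> x = {#}"
  by (rule reach_empty[OF pWF_post_nonempty])

lemma pWF_io_mset:
  assumes "pWF N"
  shows "set_mset (mset_set (inp N)) \<subseteq> places N" "set_mset (mset_set (outp N)) \<subseteq> places N"
    and "mset_set (outp N) \<noteq> {#}"
proof -
  have fin: "finite (places N)" and io: "inp N \<subseteq> places N" "outp N \<subseteq> places N" "outp N \<noteq> {}"
    using assms by (auto simp: pWF_def petri_net_def)
  then show "set_mset (mset_set (inp N)) \<subseteq> places N" "set_mset (mset_set (outp N)) \<subseteq> places N"
    using finite_subset[OF io(1) fin] finite_subset[OF io(2) fin] by auto
  show "mset_set (outp N) \<noteq> {#}" using io fin finite_subset by (auto simp: mset_set_empty_iff)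
qed

lemma sub_sound_pD:
  assumes "sub_sound_p N" and "k' \<le> k" and "set_mset m' \<subseteq> places N"
    and "reach N (repeat_mset k (mset_set (inp N))) (m' + repeat_mset k' (mset_set (outp N)))"
  shows "reach N m' (repeat_mset (k - k') (mset_set (outp N)))"
  using assms unfolding sub_sound_p_def by blast

lemma sub_sound_output_bound:
  assumes pwf: "pWF N" and sound: "sub_sound_p N" and mu: "set_mset \<mu> \<subseteq> places N"
    and run: "reach N (repeat_mset a (mset_set (inp N))) (\<mu> + repeat_mset b (mset_set (outp N)))"
  shows "b \<le> a"
proof (rule ccontr)
  assume "\<not> b \<le> a"
  define m' where "m' = \<mu> + repeat_mset (b - a) (mset_set (outp N))"
  have "repeat_mset b (mset_set (outp N)) =
      repeat_mset (b - a) (mset_set (outp N)) + repeat_mset a (mset_set (outp N))"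
    using \<open>\<not> b \<le> a\<close> repeat_mset_distrib[of "b - a" a] by simp
  then have "reach N (repeat_mset a (mset_set (inp N))) (m' + repeat_mset a (mset_set (outp N)))"
    using run unfolding m'_def by (simp add: add.assoc)
  moreover have "set_mset m' \<subseteq> places N"
    using mu set_mset_repeat[of "b - a" "mset_set (outp N)"] pWF_io_mset(2)[OF pwf]
    unfolding m'_def by auto
  ultimately have "reach N m' (repeat_mset (a - a) (mset_set (outp N)))"
    by (intro sub_sound_pD[OF sound le_refl])
  then have "m' = {#}"
    using pWF_reach_empty[OF pwf] by simp
  then have "repeat_mset (b - a) (mset_set (outp N)) = {#}"
    unfolding m'_def by simp
  with pWF_io_mset(3)[OF pwf] \<open>\<not> b \<le> a\<close> show False by (simp add: repeat_mset_eq_empty_iff)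
qed

lemma sub_sound_inputs_to_outputs:
  assumes pwf: "pWF N" and sound: "sub_sound_p N"
  shows "reach N (repeat_mset n (mset_set (inp N))) (repeat_mset n (mset_set (outp N)))"
proof -
  have inputs: "set_mset (repeat_mset n (mset_set (inp N))) \<subseteq> places N"
    using set_mset_repeat[of n "mset_set (inp N)"] pWF_io_mset(1)[OF pwf] by (rule order_trans)
  have "reach N (repeat_mset n (mset_set (inp N)))
      (repeat_mset n (mset_set (inp N)) + repeat_mset 0 (mset_set (outp N)))"
    by simp
  from sub_sound_pD[OF sound le0 inputs this] show ?thesis by simp
qed

locale place_substitution =
  fixes N M :: "'a wfnet" and p :: 'a
  assumes N_tWF: "tWF N" and N_sound: "sub_sound_t N"
    and M_pWF: "pWF M" and M_sound: "sub_sound_p M"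
    and disjoint: "(places N \<union> trans N) \<inter> (places M \<union> trans M) = {}"
    and p_place: "p \<in> places N"
begin

abbreviation R :: "'a wfnet" where
  "R \<equiv> subst_place N p M"

abbreviation in_M :: "'a multiset" where
  "in_M \<equiv> mset_set (inp M)"

abbreviation out_M :: "'a multiset" where
  "out_M \<equiv> mset_set (outp M)"

lemma N_net: "petri_net N"
  using N_tWF by (simp add: tWF_def)

lemma M_net: "petri_net M"
  using M_pWF by (simp add: pWF_def)

lemma N_io: "inp N \<subseteq> trans N" "outp N \<subseteq> trans N" "inp N \<noteq> {}" "outp N \<noteq> {}" "wf_connected N"
  using N_tWF by (auto simp: tWF_def)

lemma M_io: "inp M \<subseteq> places M" "outp M \<subseteq> places M" "inp M \<noteq> {}" "wf_connected M"
  "finite (inp M)" "finite (outp M)"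
  using M_pWF finite_subset by (auto simp: pWF_def petri_net_def)

lemma p_fresh: "p \<notin> trans N" "p \<notin> inp N" "p \<notin> outp N" "p \<notin> places M" "p \<notin> trans M"
  using p_place N_net N_io disjoint by (auto simp: petri_net_def)

lemma R_simps:
  "places R = (places N - {p}) \<union> places M" "trans R = trans N \<union> trans M"
  "inp R = inp N" "outp R = outp N"
  by (simp_all add: subst_place_def p_fresh)

lemma R_pre_N: "t \<in> trans N \<Longrightarrow>
    pre (flow R) t = (pre (flow N) t - {p}) \<union> (if p \<in> pre (flow N) t then outp M else {})"
  using M_net M_io(1,2) disjoint p_fresh
  unfolding subst_place_def pre_def post_def petri_net_def by auto

lemma R_post_N: "t \<in> trans N \<Longrightarrow>
    post (flow R) t = (post (flow N) t - {p}) \<union> (if p \<in> post (flow N) t then inp M else {})"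
  using M_net M_io(1,2) disjoint p_fresh
  unfolding subst_place_def pre_def post_def petri_net_def by auto

lemma R_pre_post_M: "t \<in> trans M \<Longrightarrow> pre (flow R) t = pre (flow M) t"
  "t \<in> trans M \<Longrightarrow> post (flow R) t = post (flow M) t"
  using N_net M_net M_io(1,2) disjoint p_fresh petri_net_pre_post(1,2)[OF N_net]
  unfolding subst_place_def pre_def post_def petri_net_def by auto

definition subst_tokens :: "('a + bool) multiset \<Rightarrow> ('a + bool) multiset \<Rightarrow> ('a + bool) multiset" where
  "subst_tokens X m = filter_mset (\<lambda>y. y \<noteq> Inl p) m + repeat_mset (count m (Inl p)) X"

lemma subst_tokens_add [simp]: "subst_tokens X (m + m') = subst_tokens X m + subst_tokens X m'"
  by (simp add: subst_tokens_def repeat_mset_distrib ac_simps)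

lemma subst_tokens_p [simp]: "subst_tokens X (replicate_mset n (Inl p)) = repeat_mset n X"
  by (induction n) (simp_all add: subst_tokens_def)

lemma subst_tokens_id: "Inl p \<notin># m \<Longrightarrow> subst_tokens X m = m"
proof -
  assume "Inl p \<notin># m"
  then have "filter_mset (\<lambda>y. y \<noteq> Inl p) m = m" "count m (Inl p) = 0"
    by (auto simp: filter_mset_eq_conv count_eq_zero_iff)
  then show ?thesis by (simp add: subst_tokens_def)
qed

lemma pcN_pre_post_places:
  assumes "t \<in> trans N"
  shows "set_mset (mset_set (pre (flow (pc N)) (Inl t))) \<subseteq> places (pc N)"
    "set_mset (mset_set (post (flow (pc N)) (Inl t))) \<subseteq> places (pc N)"
  using petri_net_trans_pre_post[OF N_net assms] petri_net_pre_post(3,4)[OF N_net]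
  by (auto simp: pc_pre pc_post pc_simps)

lemma mset_pcR_pre_post_N:
  assumes t: "t \<in> trans N"
  shows "mset_set (pre (flow (pc R)) (Inl t)) =
      subst_tokens (image_mset Inl out_M) (mset_set (pre (flow (pc N)) (Inl t)))"
    "mset_set (post (flow (pc R)) (Inl t)) =
      subst_tokens (image_mset Inl in_M) (mset_set (post (flow (pc N)) (Inl t)))"
proof -
  have fin: "finite (pre (flow (pc N)) (Inl t))" "finite (post (flow (pc N)) (Inl t))"
    using petri_net_pre_post(3,4)[OF N_net] by (simp_all add: pc_pre pc_post)
  have disj: "pre (flow (pc N)) (Inl t) \<inter> Inl ` outp M = {}"
    "post (flow (pc N)) (Inl t) \<inter> Inl ` inp M = {}"
    using petri_net_trans_pre_post[OF N_net t] M_io(1,2) disjoint by (auto simp: pc_pre pc_post)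
  have "pre (flow (pc R)) (Inl t) = (pre (flow (pc N)) (Inl t) - {Inl p})
      \<union> (if Inl p \<in> pre (flow (pc N)) (Inl t) then Inl ` outp M else {})"
    using R_pre_N[OF t] by (auto simp: pc_pre R_simps)
  then show "mset_set (pre (flow (pc R)) (Inl t)) =
      subst_tokens (image_mset Inl out_M) (mset_set (pre (flow (pc N)) (Inl t)))"
    using mset_set_replace[OF fin(1) _ disj(1)] M_io(6)
    by (simp add: subst_tokens_def image_mset_mset_set)
  have "post (flow (pc R)) (Inl t) = (post (flow (pc N)) (Inl t) - {Inl p})
      \<union> (if Inl p \<in> post (flow (pc N)) (Inl t) then Inl ` inp M else {})"
    using R_post_N[OF t] by (auto simp: pc_post R_simps)
  then show "mset_set (post (flow (pc R)) (Inl t)) =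
      subst_tokens (image_mset Inl in_M) (mset_set (post (flow (pc N)) (Inl t)))"
    using mset_set_replace[OF fin(2) _ disj(2)] M_io(5)
    by (simp add: subst_tokens_def image_mset_mset_set)
qed

lemma mset_pcR_pre_post_M:
  assumes t: "t \<in> trans M"
  shows "mset_set (pre (flow (pc R)) (Inl t)) = image_mset Inl (mset_set (pre (flow M) t))"
    "mset_set (post (flow (pc R)) (Inl t)) = image_mset Inl (mset_set (post (flow M) t))"
proof -
  have "t \<notin> inp N" "t \<notin> outp N" using t N_io(1,2) disjoint by blast+
  then show "mset_set (pre (flow (pc R)) (Inl t)) = image_mset Inl (mset_set (pre (flow M) t))"
    "mset_set (post (flow (pc R)) (Inl t)) = image_mset Inl (mset_set (post (flow M) t))"
    by (simp_all add: pc_pre pc_post R_simps R_pre_post_M[OF t] image_mset_mset_set)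
qed

lemma embeds_M: "embeds Inl M (pc R)"
  unfolding embeds_def
proof
  fix t assume t: "t \<in> trans M"
  then have "Inl t \<in> trans (pc R)" by (simp add: pc_simps R_simps)
  with mset_pcR_pre_post_M[OF t] show "\<exists>t' \<in> trans (pc R).
      mset_set (pre (flow (pc R)) t') = image_mset Inl (mset_set (pre (flow M) t)) \<and>
      mset_set (post (flow (pc R)) t') = image_mset Inl (mset_set (post (flow M) t))"
    by blast
qed

lemma lift_M: "reach M x y \<Longrightarrow> reach (pc R) (image_mset Inl x + c) (image_mset Inl y + c)"
  by (rule reach_add[OF reach_embeds[OF embeds_M]])

text \<open>A marking of pc R splits into its part on the places of M (read as a marking of M) and
  the rest, which lives on places of pc N other than p.\<close>

definition outer :: "('a + bool) multiset \<Rightarrow> ('a + bool) multiset" where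
  "outer m = filter_mset (\<lambda>x. x \<notin> Inl ` places M) m"

definition inner :: "('a + bool) multiset \<Rightarrow> 'a multiset" where
  "inner m = image_mset projl (filter_mset (\<lambda>x. x \<in> Inl ` places M) m)"

lemma outer_inner_add [simp]:
  "outer (x + y) = outer x + outer y" "inner (x + y) = inner x + inner y"
  by (simp_all add: outer_def inner_def)

lemma outer_inner_repeat [simp]:
  "outer (repeat_mset n x) = repeat_mset n (outer x)" "inner (repeat_mset n x) = repeat_mset n (inner x)"
  by (induction n) (simp_all add: outer_def inner_def)

lemma marking_split: "m = outer m + image_mset Inl (inner m)"
proof -
  have "image_mset Inl (inner m) = image_mset (Inl \<circ> projl) (filter_mset (\<lambda>x. x \<in> Inl ` places M) m)"
    by (simp add: inner_def multiset.map_comp)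
  also have "\<dots> = filter_mset (\<lambda>x. x \<in> Inl ` places M) m"
    by (rule multiset.map_ident_strong) auto
  finally show ?thesis
    unfolding outer_def by (metis add.commute multiset_partition)
qed

lemma inner_places: "set_mset (inner m) \<subseteq> places M"
  unfolding inner_def by auto

lemma pcN_marking:
  assumes "set_mset m \<subseteq> places (pc N)"
  shows "outer m = m" "inner m = {#}"
proof -
  have "\<forall>x \<in># m. x \<notin> Inl ` places M"
    using assms disjoint by (auto simp: pc_simps)
  then show "outer m = m" "inner m = {#}"
    unfolding outer_def inner_def by (auto simp: filter_mset_eq_conv filter_mset_eq_mempty_iff)
qed

lemma M_marking:
  assumes "set_mset Y \<subseteq> places M"
  shows "outer (image_mset Inl Y) = {#}" "inner (image_mset Inl Y) = Y"
proof -
  have all_inner: "\<forall>x \<in># image_mset Inl Y. x \<in> Inl ` places M"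
    using assms by auto
  then show "outer (image_mset Inl Y) = {#}"
    unfolding outer_def filter_mset_eq_mempty_iff by blast
  have filter_id: "filter_mset (\<lambda>x. x \<in> Inl ` places M) (image_mset Inl Y) = image_mset Inl Y"
    unfolding filter_mset_eq_conv using all_inner by simp
  show "inner (image_mset Inl Y) = Y"
    unfolding inner_def filter_id by (simp add: multiset.map_comp comp_def)
qed

lemma M_io_places: "set_mset in_M \<subseteq> places M" "set_mset out_M \<subseteq> places M"
  using pWF_io_mset(1,2)[OF M_pWF] .

lemma outer_inner_subst:
  assumes "set_mset m \<subseteq> places (pc N)" "set_mset Y \<subseteq> places M"
  shows "outer (subst_tokens (image_mset Inl Y) m) = filter_mset (\<lambda>y. y \<noteq> Inl p) m"
    "inner (subst_tokens (image_mset Inl Y) m) = repeat_mset (count m (Inl p)) Y"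
proof -
  have "set_mset (filter_mset (\<lambda>y. y \<noteq> Inl p) m) \<subseteq> places (pc N)"
    using assms(1) by auto
  then show "outer (subst_tokens (image_mset Inl Y) m) = filter_mset (\<lambda>y. y \<noteq> Inl p) m"
    "inner (subst_tokens (image_mset Inl Y) m) = repeat_mset (count m (Inl p)) Y"
    unfolding subst_tokens_def using pcN_marking M_marking[OF assms(2)] by simp_all
qed

definition splits :: "nat \<Rightarrow> ('a + bool) multiset \<Rightarrow> bool" where
  "splits k m \<longleftrightarrow> (\<exists>a b.
     reach M (repeat_mset a in_M) (inner m + repeat_mset b out_M) \<and>
     reach (pc N) (replicate_mset k (Inr True)) (outer m + replicate_mset (a - b) (Inl p)))"

lemma splits_init: "splits k (replicate_mset k (Inr True))"
proof -
  have "set_mset (replicate_mset k (Inr True)) \<subseteq> places (pc N)"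
    by (simp add: pc_simps)
  then show ?thesis
    unfolding splits_def using pcN_marking by (intro exI[of _ 0]) simp
qed

lemma splits_M_transition:
  assumes t: "t \<in> trans M" and inv: "splits k (image_mset Inl (mset_set (pre (flow M) t)) + c)"
  shows "splits k (image_mset Inl (mset_set (post (flow M) t)) + c)"
proof -
  let ?P = "mset_set (pre (flow M) t)" and ?Q = "mset_set (post (flow M) t)"
  have places: "set_mset ?P \<subseteq> places M" "set_mset ?Q \<subseteq> places M"
    using petri_net_trans_pre_post[OF M_net t] petri_net_pre_post(3,4)[OF M_net] by auto
  from inv obtain a b
    where M_run: "reach M (repeat_mset a in_M) (?P + (inner c + repeat_mset b out_M))"
      and N_run: "reach (pc N) (replicate_mset k (Inr True)) (outer c + replicate_mset (a - b) (Inl p))"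
    unfolding splits_def by (auto simp: M_marking[OF places(1)] add.assoc)
  have "reach M (repeat_mset a in_M) (?Q + (inner c + repeat_mset b out_M))"
    using reach_trans[OF M_run reach_step[OF step_transition[OF t]]] .
  with N_run show ?thesis
    unfolding splits_def by (auto simp: M_marking[OF places(2)] add.assoc)
qed

lemma N_transition_split:
  assumes t: "t \<in> trans N"
  defines "P \<equiv> mset_set (pre (flow (pc N)) (Inl t))" and "Q \<equiv> mset_set (post (flow (pc N)) (Inl t))"
  shows "outer (mset_set (pre (flow (pc R)) (Inl t))) = filter_mset (\<lambda>y. y \<noteq> Inl p) P"
    "inner (mset_set (pre (flow (pc R)) (Inl t))) = repeat_mset (count P (Inl p)) out_M"
    "outer (mset_set (post (flow (pc R)) (Inl t))) = filter_mset (\<lambda>y. y \<noteq> Inl p) Q"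
    "inner (mset_set (post (flow (pc R)) (Inl t))) = repeat_mset (count Q (Inl p)) in_M"
  using outer_inner_subst[OF pcN_pre_post_places(1)[OF t] M_io_places(2)]
    outer_inner_subst[OF pcN_pre_post_places(2)[OF t] M_io_places(1)]
  unfolding mset_pcR_pre_post_N[OF t] P_def Q_def by simp_all

lemma pcN_step_p_tokens:
  assumes t: "t \<in> trans N"
  defines "P \<equiv> mset_set (pre (flow (pc N)) (Inl t))" and "Q \<equiv> mset_set (post (flow (pc N)) (Inl t))"
  shows "step (pc N)
    (filter_mset (\<lambda>y. y \<noteq> Inl p) P + c + replicate_mset (count P (Inl p) + e) (Inl p))
    (filter_mset (\<lambda>y. y \<noteq> Inl p) Q + c + replicate_mset (count Q (Inl p) + e) (Inl p))"
proof -
  have fire: "step (pc N) (P + (c + replicate_mset e (Inl p))) (Q + (c + replicate_mset e (Inl p)))"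
    unfolding P_def Q_def using t by (intro step_transition) (simp add: pc_simps)
  have tokens: "filter_mset (\<lambda>y. y \<noteq> Inl p) X + c + replicate_mset (count X (Inl p) + e) (Inl p)
      = X + (c + replicate_mset e (Inl p))" for X
    by (auto simp: multiset_eq_iff)
  show ?thesis
    unfolding tokens by (rule fire)
qed

text \<open>A transition t of N that takes n tokens from p and puts d tokens on p in pc N takes n
  copies of the final marking of M and puts d copies of the initial marking of M in pc R.
  Since these n copies of the final marking have arrived in M, the output bound of M shows
  that p carries at least n tokens in the corresponding run of pc N, so t fires there too.\<close>

lemma splits_N_transition:
  assumes t: "t \<in> trans N" and inv: "splits k (mset_set (pre (flow (pc R)) (Inl t)) + c)"
  shows "splits k (mset_set (post (flow (pc R)) (Inl t)) + c)"
proof -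
  define n d where "n = count (mset_set (pre (flow (pc N)) (Inl t))) (Inl p)"
    and "d = count (mset_set (post (flow (pc N)) (Inl t))) (Inl p)"
  define P' Q' where "P' = filter_mset (\<lambda>y. y \<noteq> Inl p) (mset_set (pre (flow (pc N)) (Inl t)))"
    and "Q' = filter_mset (\<lambda>y. y \<noteq> Inl p) (mset_set (post (flow (pc N)) (Inl t)))"
  note split = N_transition_split[OF t, folded n_def d_def P'_def Q'_def]
  from inv obtain a b
    where M_run: "reach M (repeat_mset a in_M) (inner c + repeat_mset (b + n) out_M)"
      and N_run: "reach (pc N) (replicate_mset k (Inr True)) (P' + outer c + replicate_mset (a - b) (Inl p))"
    unfolding splits_def outer_inner_add split by (auto simp: repeat_mset_distrib ac_simps)
  have "b + n \<le> a"
    by (rule sub_sound_output_bound[OF M_pWF M_sound inner_places M_run])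
  define e where "e = a - b - n"
  have tokens: "a - b = n + e" "(a + d) - (b + n) = d + e"
    using \<open>b + n \<le> a\<close> unfolding e_def by arith+
  have N_step: "step (pc N) (P' + outer c + replicate_mset (n + e) (Inl p))
      (Q' + outer c + replicate_mset (d + e) (Inl p))"
    unfolding P'_def Q'_def n_def d_def by (rule pcN_step_p_tokens[OF t])
  have "reach M (repeat_mset (a + d) in_M) (repeat_mset d in_M + inner c + repeat_mset (b + n) out_M)"
    using reach_add[OF M_run, of "repeat_mset d in_M"] by (simp add: repeat_mset_distrib ac_simps)
  moreover have "reach (pc N) (replicate_mset k (Inr True))
      (Q' + outer c + replicate_mset ((a + d) - (b + n)) (Inl p))"
    using reach_trans[OF N_run[unfolded tokens(1)] reach_step[OF N_step]] unfolding tokens(2) .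
  ultimately show ?thesis
    unfolding splits_def outer_inner_add split
    by (intro exI[of _ "a + d"] exI[of _ "b + n"]) (simp add: ac_simps)
qed

lemma splits_reach:
  assumes "reach (pc R) (replicate_mset k (Inr True)) m"
  shows "splits k m"
  using assms unfolding reach_def
proof (induction rule: rtranclp_induct)
  case base
  show ?case by (rule splits_init)
next
  case (step m m')
  then obtain t c where "t \<in> trans N \<union> trans M"
    and m: "m = mset_set (pre (flow (pc R)) (Inl t)) + c"
    and m': "m' = mset_set (post (flow (pc R)) (Inl t)) + c"
    unfolding step_iff by (auto simp: pc_simps R_simps)
  then consider "t \<in> trans N" | "t \<in> trans M" by blast
  then show ?case
  proof cases
    case 1
    then show ?thesis using splits_N_transition step.IH unfolding m m' by blast
  next
    case 2
    then show ?thesis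
      using splits_M_transition[OF 2] step.IH unfolding m m' mset_pcR_pre_post_M[OF 2] by blast
  qed
qed

text \<open>A transition of N fires in pc R and produces copies of the initial
  marking of M, which M then moves to copies of its final marking.\<close>

abbreviation expand :: "('a + bool) multiset \<Rightarrow> ('a + bool) multiset" where
  "expand \<equiv> subst_tokens (image_mset Inl out_M)"

lemma R_inputs_to_outputs:
  "reach (pc R) (subst_tokens (image_mset Inl in_M) m + c) (expand m + c)"
proof -
  let ?n = "count m (Inl p)" and ?rest = "filter_mset (\<lambda>y. y \<noteq> Inl p) m + c"
  have "reach (pc R) (image_mset Inl (repeat_mset ?n in_M) + ?rest) (image_mset Inl (repeat_mset ?n out_M) + ?rest)"
    by (rule lift_M[OF sub_sound_inputs_to_outputs[OF M_pWF M_sound]])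
  then show ?thesis
    by (simp add: subst_tokens_def image_mset_repeat ac_simps)
qed

lemma simulate_step:
  assumes "step (pc N) x y"
  shows "reach (pc R) (expand x) (expand y)"
proof -
  obtain t c where t: "t \<in> trans N"
    and x: "x = mset_set (pre (flow (pc N)) (Inl t)) + c"
    and y: "y = mset_set (post (flow (pc N)) (Inl t)) + c"
    using assms unfolding step_iff by (auto simp: pc_simps)
  have "step (pc R) (expand x) (mset_set (post (flow (pc R)) (Inl t)) + expand c)"
    unfolding x subst_tokens_add mset_pcR_pre_post_N(1)[OF t, symmetric]
    using t by (intro step_transition) (simp add: pc_simps R_simps)
  moreover have "reach (pc R) (mset_set (post (flow (pc R)) (Inl t)) + expand c) (expand y)"
    unfolding y subst_tokens_add mset_pcR_pre_post_N(2)[OF t] by (rule R_inputs_to_outputs)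
  ultimately show ?thesis
    by (rule reach_trans[OF reach_step])
qed

lemma simulate: "reach (pc N) x y \<Longrightarrow> reach (pc R) (expand x) (expand y)"
  unfolding reach_def[of "pc N"]
proof (induction rule: rtranclp_induct)
  case (step y z)
  then show ?case using simulate_step reach_trans by blast
qed simp

lemma pcN_sub_sound:
  assumes "k' \<le> k" and "set_mset m \<subseteq> places (pc N)"
    and "reach (pc N) (replicate_mset k (Inr True)) (m + replicate_mset k' (Inr False))"
  shows "reach (pc N) m (replicate_mset (k - k') (Inr False))"
  using sub_sound_pD[OF N_sound[unfolded sub_sound_t_def] assms(1,2)] assms(3)
  by (simp add: pc_simps)

lemma R_sub_sound: "sub_sound_t R"
  unfolding sub_sound_t_def sub_sound_p_def pc_simps(3,4)
proof (intro allI impI)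
  fix k k' :: nat and m :: "('a + bool) multiset"
  assume "k' \<le> k" and m_places: "set_mset m \<subseteq> places (pc R)"
    and "reach (pc R) (repeat_mset k (mset_set {Inr True})) (m + repeat_mset k' (mset_set {Inr False}))"
  then have run: "reach (pc R) (replicate_mset k (Inr True)) (m + replicate_mset k' (Inr False))"
    by simp
  have outer_places: "set_mset (outer m) \<subseteq> places (pc N)" and "Inl p \<notin># outer m"
    using m_places p_place p_fresh(4) by (auto simp: outer_def pc_simps R_simps)
  have final: "set_mset (replicate_mset k' (Inr False)) \<subseteq> places (pc N)"
    by (simp add: pc_simps)
  from splits_reach[OF run] obtain a b
    where M_run: "reach M (repeat_mset a in_M) (inner m + repeat_mset b out_M)"
      and N_run: "reach (pc N) (replicate_mset k (Inr True))
        ((outer m + replicate_mset (a - b) (Inl p)) + replicate_mset k' (Inr False))"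
    unfolding splits_def by (auto simp: pcN_marking[OF final] ac_simps)
  have "b \<le> a"
    by (rule sub_sound_output_bound[OF M_pWF M_sound inner_places M_run])
  have "reach M (inner m) (repeat_mset (a - b) out_M)"
    by (rule sub_sound_pD[OF M_sound \<open>b \<le> a\<close> inner_places M_run])
  from lift_M[OF this, of "outer m"]
  have to_N_marking: "reach (pc R) m (expand (outer m + replicate_mset (a - b) (Inl p)))"
    using marking_split[of m] subst_tokens_id[OF \<open>Inl p \<notin># outer m\<close>]
    by (simp add: image_mset_repeat add.commute)
  have "reach (pc N) (outer m + replicate_mset (a - b) (Inl p)) (replicate_mset (k - k') (Inr False))"
    using outer_places p_place by (intro pcN_sub_sound[OF \<open>k' \<le> k\<close> _ N_run]) (auto simp: pc_simps)
  from simulate[OF this]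
  have "reach (pc R) (expand (outer m + replicate_mset (a - b) (Inl p))) (replicate_mset (k - k') (Inr False))"
    using subst_tokens_id[of "replicate_mset (k - k') (Inr False)"] by simp
  with to_N_marking show "reach (pc R) m (repeat_mset (k - k') (mset_set {Inr False}))"
    by (simp add: reach_trans)
qed

lemma R_flow:
  "(x, y) \<in> flow N \<Longrightarrow> x \<noteq> p \<Longrightarrow> y \<noteq> p \<Longrightarrow> (x, y) \<in> flow R"
  "(x, y) \<in> flow M \<Longrightarrow> (x, y) \<in> flow R"
  "(x, p) \<in> flow N \<Longrightarrow> q \<in> inp M \<Longrightarrow> (x, q) \<in> flow R"
  "(p, y) \<in> flow N \<Longrightarrow> q \<in> outp M \<Longrightarrow> (q, y) \<in> flow R"
  by (simp_all add: subst_place_def pre_def post_def)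

lemma M_paths_in_R:
  "x \<in> places M \<union> trans M \<Longrightarrow> \<exists>q \<in> inp M. (q, x) \<in> (flow R)\<^sup>*"
  "x \<in> places M \<union> trans M \<Longrightarrow> \<exists>q \<in> outp M. (x, q) \<in> (flow R)\<^sup>*"
proof -
  have "(flow M)\<^sup>* \<subseteq> (flow R)\<^sup>*"
    using R_flow(2) by (intro rtrancl_mono) auto
  then show "x \<in> places M \<union> trans M \<Longrightarrow> \<exists>q \<in> inp M. (q, x) \<in> (flow R)\<^sup>*"
    "x \<in> places M \<union> trans M \<Longrightarrow> \<exists>q \<in> outp M. (x, q) \<in> (flow R)\<^sup>*"
    using M_io(4) unfolding wf_connected_def by blast+
qed

lemma M_input_to_output: "q \<in> inp M \<Longrightarrow> \<exists>w \<in> outp M. (q, w) \<in> (flow R)\<^sup>*"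
  using M_paths_in_R(2) M_io(1) by blast

lemma N_path_in_R_forward:
  assumes "(y, x) \<in> (flow N)\<^sup>*" and "y \<noteq> p"
  shows "(x \<noteq> p \<longrightarrow> (y, x) \<in> (flow R)\<^sup>*) \<and> (x = p \<longrightarrow> (\<forall>q \<in> inp M. (y, q) \<in> (flow R)\<^sup>*))"
  using assms
proof (induction rule: rtrancl_induct)
  case (step z x)
  show ?case
  proof (cases "z = p")
    case True
    then have to_inputs: "\<forall>q \<in> inp M. (y, q) \<in> (flow R)\<^sup>*" using step by blast
    obtain q w where "q \<in> inp M" "w \<in> outp M" "(q, w) \<in> (flow R)\<^sup>*"
      using M_io(3) M_input_to_output by blast
    moreover have "x \<noteq> p \<Longrightarrow> (w, x) \<in> flow R"
      using R_flow(4) step.hyps(2) True \<open>w \<in> outp M\<close> by blast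
    ultimately show ?thesis
      using to_inputs by (meson rtrancl.rtrancl_into_rtrancl rtrancl_trans)
  next
    case False
    then have "(y, z) \<in> (flow R)\<^sup>*" using step by blast
    then show ?thesis
      using R_flow(1)[OF step.hyps(2)] R_flow(3) step.hyps(2) False
      by (meson rtrancl.rtrancl_into_rtrancl)
  qed
qed simp

lemma N_path_in_R_backward:
  assumes "(x, y) \<in> (flow N)\<^sup>*" and "y \<noteq> p"
  shows "(x \<noteq> p \<longrightarrow> (x, y) \<in> (flow R)\<^sup>*) \<and> (x = p \<longrightarrow> (\<forall>q \<in> outp M. (q, y) \<in> (flow R)\<^sup>*))"
  using assms
proof (induction rule: converse_rtrancl_induct)
  case (step x z)
  show ?case
  proof (cases "z = p")
    case True
    then have from_outputs: "\<forall>q \<in> outp M. (q, y) \<in> (flow R)\<^sup>*" using step by blast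
    obtain q w where "q \<in> inp M" "w \<in> outp M" "(q, w) \<in> (flow R)\<^sup>*"
      using M_io(3) M_input_to_output by blast
    moreover have "x \<noteq> p \<Longrightarrow> (x, q) \<in> flow R"
      using R_flow(3) step.hyps(1) True \<open>q \<in> inp M\<close> by blast
    ultimately show ?thesis
      using from_outputs by (meson converse_rtrancl_into_rtrancl rtrancl_trans)
  next
    case False
    then have "(z, y) \<in> (flow R)\<^sup>*" using step by blast
    then show ?thesis
      using R_flow(1)[OF step.hyps(1)] R_flow(4) step.hyps(1) False
      by (meson converse_rtrancl_into_rtrancl)
  qed
qed simp

text \<open>Every node of R is reachable from an input transition of N: nodes of M through p, the
  other nodes along their path in N.\<close>

lemma R_from_inputs:
  assumes x: "x \<in> places R \<union> trans R"
  shows "\<exists>i \<in> inp N. (i, x) \<in> (flow R)\<^sup>*"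
proof (cases "x \<in> places M \<union> trans M")
  case True
  obtain q where q: "q \<in> inp M" "(q, x) \<in> (flow R)\<^sup>*" using M_paths_in_R(1)[OF True] by blast
  obtain i where i: "i \<in> inp N" "(i, p) \<in> (flow N)\<^sup>*"
    using N_io(5) p_place unfolding wf_connected_def by blast
  then have "(i, q) \<in> (flow R)\<^sup>*" using N_path_in_R_forward[OF i(2)] q(1) p_fresh(2) by blast
  then show ?thesis using i(1) q(2) by (meson rtrancl_trans)
next
  case False
  then have "x \<in> places N \<union> trans N" "x \<noteq> p" using x p_fresh by (auto simp: R_simps)
  then obtain i where "i \<in> inp N" "(i, x) \<in> (flow N)\<^sup>*"
    using N_io(5) unfolding wf_connected_def by blast
  then show ?thesis using N_path_in_R_forward \<open>x \<noteq> p\<close> p_fresh(2) by blast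
qed

lemma R_to_outputs:
  assumes x: "x \<in> places R \<union> trans R"
  shows "\<exists>q \<in> outp N. (x, q) \<in> (flow R)\<^sup>*"
proof (cases "x \<in> places M \<union> trans M")
  case True
  obtain w where w: "w \<in> outp M" "(x, w) \<in> (flow R)\<^sup>*" using M_paths_in_R(2)[OF True] by blast
  obtain q where q: "q \<in> outp N" "(p, q) \<in> (flow N)\<^sup>*"
    using N_io(5) p_place unfolding wf_connected_def by blast
  then have "(w, q) \<in> (flow R)\<^sup>*" using N_path_in_R_backward[OF q(2)] w(1) p_fresh(3) by blast
  then show ?thesis using q(1) w(2) by (meson rtrancl_trans)
next
  case False
  then have "x \<in> places N \<union> trans N" "x \<noteq> p" using x p_fresh by (auto simp: R_simps)
  then obtain q where "q \<in> outp N" "(x, q) \<in> (flow N)\<^sup>*"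
    using N_io(5) unfolding wf_connected_def by blast
  then show ?thesis using N_path_in_R_backward \<open>x \<noteq> p\<close> p_fresh(3) by blast
qed

lemma R_tWF: "tWF R"
  unfolding tWF_def petri_net_def
proof (intro conjI)
  show "finite (places R)" "finite (trans R)"
    using N_net M_net by (auto simp: R_simps petri_net_def)
  show "places R \<inter> trans R = {}"
    using N_net M_net disjoint by (auto simp: R_simps petri_net_def)
  show "inp R \<noteq> {}" "outp R \<noteq> {}" "inp R \<subseteq> trans R" "outp R \<subseteq> trans R"
    using N_io by (auto simp: R_simps)
  show "wf_connected R"
    unfolding wf_connected_def R_simps(3,4) using R_from_inputs R_to_outputs by blast
  have "pre (flow N) p \<subseteq> trans N" "post (flow N) p \<subseteq> trans N"
    using N_net p_place by (auto simp: pre_def post_def petri_net_def)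
  then show "flow R \<subseteq> places R \<times> trans R \<union> trans R \<times> places R"
    using N_net M_net M_io(1,2) by (auto simp: subst_place_def petri_net_def)
qed

end

theorem mainTheorem9:
  fixes N M :: "'a wfnet" and p :: 'a
  assumes "tWF N" and "sub_sound_t N"
    and "pWF M" and "sub_sound_p M"
    and "(places N \<union> trans N) \<inter> (places M \<union> trans M) = {}"
    and "p \<in> places N"
  shows "tWF (subst_place N p M) \<and> sub_sound_t (subst_place N p M)"
proof -
  interpret place_substitution N M p
    using assms by unfold_locales
  show ?thesis using R_tWF R_sub_sound by blast
qed

end
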